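(* Let $F:\mathbb{F}_{2^n}\to\mathbb{F}_{2^n}$ be differentially $4$-uniform. Let $A=\{(a,c,d):\exists\,b\text{ with }\mathrm{EBCT}_F(a,b,c,d)=4\}$ and $B=\{(c,d,b):\exists\,a\text{ with }\mathrm{EBCT}_F(a,b,c,d)=4\}$. For $a,b,c,d\in\mathbb{F}_{2^n}^*$: $\mathrm{EBCT}_F(a,b,c,d)=2$ if and only if $\mathrm{LBCT}_F(a,c,d)=\mathrm{UBCT}_F(c,d,b)=2$. Furthermore, for $a,c,d\in\mathbb{F}_{2^n}^*$, $(a,c,d)\in A$ if and only if $\mathrm{LBCT}_F(a,c,d)=4$; and for $c,d,b\in\mathbb{F}_{2^n}^*$, $(c,d,b)\in B$ if and only if $\mathrm{UBCT}_F(c,d,b)=4$.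
   Context: $\mathrm{DDT}_F(a,b)=|\{X:F(X+a)+F(X)=b\}|$; $F$ is differentially $4$-uniform if $\mathrm{DDT}_F(a,b)\le4$ for all $a\neq0$, $b$. For any function $F$: $\mathrm{EBCT}_F(a,b,c,d)=|\{X: F(X)+F(X+a)=b,\ F(X)+F(X+c)=d,\ F(X+a+c)+F(X+a)=d\}|$; $\mathrm{LBCT}_F(a,b,c)=|\{X: \exists Y,\ X+Y=b,\ F(X+a)+F(Y+a)=c,\ F(X)+F(Y)=c\}|$; $\mathrm{UBCT}_F(a,b,c)=|\{X: \exists Y,\ F(X+a)+F(Y+a)=c,\ F(X)+F(Y)=c,\ F(X)+F(X+a)=b\}|$ (variables in $\mathbb{F}_{2^n}$). *)

theory Defs
  imports Main
begin

text \<open>Functions F on a finite field (the field GF(2^n) is modelled by a type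
  'a of class field and finite with CARD('a) = 2^n). Addition is field addition.\<close>

definition DDT :: "('a::{field,finite} \<Rightarrow> 'a) \<Rightarrow> 'a \<Rightarrow> 'a \<Rightarrow> nat" where
  "DDT F a b = card {X. F (X + a) + F X = b}"

definition diff_4_uniform :: "('a::{field,finite} \<Rightarrow> 'a) \<Rightarrow> bool" where
  "diff_4_uniform F \<longleftrightarrow> (\<forall>a b. a \<noteq> 0 \<longrightarrow> DDT F a b \<le> 4)"

definition EBCT :: "('a::{field,finite} \<Rightarrow> 'a) \<Rightarrow> 'a \<Rightarrow> 'a \<Rightarrow> 'a \<Rightarrow> 'a \<Rightarrow> nat" where
  "EBCT F a b c d = card {X. F X + F (X + a) = b \<and> F X + F (X + c) = d
                            \<and> F (X + a + c) + F (X + a) = d}"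

definition LBCT :: "('a::{field,finite} \<Rightarrow> 'a) \<Rightarrow> 'a \<Rightarrow> 'a \<Rightarrow> 'a \<Rightarrow> nat" where
  "LBCT F a b c = card {X. \<exists>Y. X + Y = b \<and> F (X + a) + F (Y + a) = c \<and> F X + F Y = c}"

definition UBCT :: "('a::{field,finite} \<Rightarrow> 'a) \<Rightarrow> 'a \<Rightarrow> 'a \<Rightarrow> 'a \<Rightarrow> nat" where
  "UBCT F a b c = card {X. \<exists>Y. F (X + a) + F (Y + a) = c \<and> F X + F Y = c
                                \<and> F X + F (X + a) = b}"

end

theory Submission
  imports Defs "HOL-Number_Theory.Residues"
begin

text \<open>In characteristic 2 put \<open>D = {X. F (X + c) + F X = d}\<close>, which has at most four
  elements when \<open>c \<noteq> 0\<close>. The EBCT solution set of \<open>(a, b, c, d)\<close> lies in \<open>D\<close> and is closed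
  under translation by \<open>a\<close> and \<open>c\<close>; for \<open>a \<noteq> c\<close> it is thus empty or has at least four
  elements, hence equals \<open>D\<close>, while for \<open>a = c\<close> it is \<open>D\<close> or empty according to whether
  \<open>b = d\<close>. The LBCT set is the union of the EBCT sets over \<open>b\<close> and the UBCT set the union
  over \<open>a\<close>, so each of them is empty or equal to any nonempty EBCT set it contains. If the
  common set has two elements, \<open>|D| \<noteq> 4\<close> forces \<open>a = c\<close>, which pins down the EBCT set.\<close>

lemma CHAR_eq_2_if_card_eq_power_2:
  assumes "card (UNIV :: 'a::{field,finite} set) = 2 ^ n"
  shows "CHAR('a) = 2"
proof -
  have "prime CHAR('a)"
    by (rule prime_CHAR_semidom) (simp add: finite_imp_CHAR_pos)
  moreover have "CHAR('a) dvd 2 ^ n"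
    using CHAR_dvd_CARD[where 'a='a] assms by simp
  ultimately show ?thesis
    by (metis prime_dvd_power primes_dvd_imp_eq two_is_prime_nat)
qed

lemma add_self_CHAR_2:
  assumes "CHAR('a::ring_1) = 2"
  shows "(x::'a) + x = 0"
  by (metis add.right_inverse assms uminus_CHAR_2)

lemma add_left_self_CHAR_2:
  assumes "CHAR('a::ring_1) = 2"
  shows "(x::'a) + (x + y) = y"
  by (simp add: add.assoc[symmetric] add_self_CHAR_2[OF assms])

lemma add_eq_iff_CHAR_2:
  assumes "CHAR('a::ring_1) = 2"
  shows "((x::'a) + y = z) \<longleftrightarrow> (y = x + z)"
  using add_left_self_CHAR_2[OF assms] by metis

lemma card_translates_eq_4:
  fixes x a c :: "'a::ab_group_add"
  assumes "a \<noteq> 0" "c \<noteq> 0" "a \<noteq> c" "a + c \<noteq> 0"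
  shows "card {x, x + a, x + c, x + a + c} = 4"
  using assms by (auto simp: add.assoc)

definition ddt_set :: "('a::plus \<Rightarrow> 'a) \<Rightarrow> 'a \<Rightarrow> 'a \<Rightarrow> 'a set" where
  "ddt_set F a b = {X. F (X + a) + F X = b}"

definition ebct_set :: "('a::plus \<Rightarrow> 'a) \<Rightarrow> 'a \<Rightarrow> 'a \<Rightarrow> 'a \<Rightarrow> 'a \<Rightarrow> 'a set" where
  "ebct_set F a b c d = {X. F X + F (X + a) = b \<and> F X + F (X + c) = d
                            \<and> F (X + a + c) + F (X + a) = d}"

definition lbct_set :: "('a::plus \<Rightarrow> 'a) \<Rightarrow> 'a \<Rightarrow> 'a \<Rightarrow> 'a \<Rightarrow> 'a set" where
  "lbct_set F a b c = {X. \<exists>Y. X + Y = b \<and> F (X + a) + F (Y + a) = c \<and> F X + F Y = c}"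

definition ubct_set :: "('a::plus \<Rightarrow> 'a) \<Rightarrow> 'a \<Rightarrow> 'a \<Rightarrow> 'a \<Rightarrow> 'a set" where
  "ubct_set F a b c = {X. \<exists>Y. F (X + a) + F (Y + a) = c \<and> F X + F Y = c
                                \<and> F X + F (X + a) = b}"

lemma DDT_eq_card: "DDT F a b = card (ddt_set F a b)"
  unfolding DDT_def ddt_set_def ..

lemma EBCT_eq_card: "EBCT F a b c d = card (ebct_set F a b c d)"
  unfolding EBCT_def ebct_set_def ..

lemma LBCT_eq_card: "LBCT F a b c = card (lbct_set F a b c)"
  unfolding LBCT_def lbct_set_def ..

lemma UBCT_eq_card: "UBCT F a b c = card (ubct_set F a b c)"
  unfolding UBCT_def ubct_set_def ..

lemma card_ddt_set_le_4:
  assumes "diff_4_uniform F" "a \<noteq> 0"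
  shows "card (ddt_set F a b) \<le> 4"
  using assms unfolding diff_4_uniform_def DDT_eq_card by blast

lemma ebct_set_subset_ddt_set:
  fixes F :: "'a::ab_semigroup_add \<Rightarrow> 'a"
  shows "ebct_set F a b c d \<subseteq> ddt_set F c d"
  unfolding ebct_set_def ddt_set_def by (auto simp: add.commute)

context
  fixes F :: "'a::ring_1 \<Rightarrow> 'a"
  assumes char: "CHAR('a) = 2"
begin

lemmas add_cancel_CHAR_2 = add_self_CHAR_2[OF char] add_left_self_CHAR_2[OF char]

lemma ebct_set_translate:
  assumes "X \<in> ebct_set F a b c d"
  shows "X + a \<in> ebct_set F a b c d" "X + c \<in> ebct_set F a b c d"
  using assms unfolding ebct_set_def by (auto simp: add_ac add_cancel_CHAR_2 add_eq_iff_CHAR_2[OF char])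

lemma ebct_set_zero:
  assumes "b \<noteq> 0"
  shows "ebct_set F 0 b c d = {}"
  using assms unfolding ebct_set_def by (auto simp: add_cancel_CHAR_2)

lemma ebct_set_diag: "ebct_set F c b c d = (if b = d then ddt_set F c d else {})"
  unfolding ebct_set_def ddt_set_def by (auto simp: add_ac add_cancel_CHAR_2)

text \<open>In characteristic 2 the partner of \<open>X\<close> in the LBCT condition is \<open>X + c\<close>.\<close>

lemma lbct_set_eq_UN: "lbct_set F a c d = (\<Union>b. ebct_set F a b c d)"
  unfolding lbct_set_def ebct_set_def add_eq_iff_CHAR_2[OF char, where z = c]
  by (auto simp: add_ac)

lemma ubct_set_eq_UN: "ubct_set F c d b = (\<Union>a. ebct_set F a b c d)"
proof (intro equalityI subsetI)
  fix X assume "X \<in> ubct_set F c d b"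
  then obtain Y where "F (X + c) + F (Y + c) = b" "F X + F Y = b" "F X + F (X + c) = d"
    unfolding ubct_set_def by blast
  then have "X \<in> ebct_set F (X + Y) b c d"
    unfolding ebct_set_def by (auto simp: add_ac add_cancel_CHAR_2 add_eq_iff_CHAR_2[OF char])
  then show "X \<in> (\<Union>a. ebct_set F a b c d)" by blast
next
  fix X assume "X \<in> (\<Union>a. ebct_set F a b c d)"
  then obtain a where "X \<in> ebct_set F a b c d" by blast
  then show "X \<in> ubct_set F c d b"
    unfolding ubct_set_def ebct_set_def
    by (intro CollectI exI[of _ "X + a"]) (auto simp: add_ac add_cancel_CHAR_2 add_eq_iff_CHAR_2[OF char])
qed

end

lemma four_le_card_ebct_set:
  fixes F :: "'a::{ring_1,finite} \<Rightarrow> 'a"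
  assumes char: "CHAR('a) = 2" and "a \<noteq> 0" "c \<noteq> 0" "a \<noteq> c"
    and X: "X \<in> ebct_set F a b c d"
  shows "4 \<le> card (ebct_set F a b c d)"
proof -
  have "a + c \<noteq> 0"
    using \<open>a \<noteq> c\<close> add_eq_iff_CHAR_2[OF char, of a c 0] by simp
  then have "card {X, X + a, X + c, X + a + c} = 4"
    using assms by (intro card_translates_eq_4)
  moreover have "{X, X + a, X + c, X + a + c} \<subseteq> ebct_set F a b c d"
    using X ebct_set_translate[OF char] by blast
  ultimately show ?thesis
    by (metis card_mono finite)
qed

context
  fixes F :: "'a::{field,finite} \<Rightarrow> 'a"
  assumes char: "CHAR('a) = 2" and uni: "diff_4_uniform F"
begin

lemma card_ddt_set_eq_4_if_ebct_set_nonempty: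
  assumes "a \<noteq> 0" "c \<noteq> 0" "a \<noteq> c" "ebct_set F a b c d \<noteq> {}"
  shows "card (ddt_set F c d) = 4"
proof -
  have "4 \<le> card (ebct_set F a b c d)"
    using assms four_le_card_ebct_set[OF char] by blast
  also have "\<dots> \<le> card (ddt_set F c d)"
    by (intro card_mono finite ebct_set_subset_ddt_set)
  finally show ?thesis
    using card_ddt_set_le_4[OF uni \<open>c \<noteq> 0\<close>, of d] by simp
qed

lemma ebct_set_eq_ddt_set:
  assumes "a \<noteq> 0" "c \<noteq> 0" "ebct_set F a b c d \<noteq> {}"
  shows "ebct_set F a b c d = ddt_set F c d"
proof (cases "a = c")
  case True
  then show ?thesis
    using assms(3) ebct_set_diag[OF char] by (auto split: if_splits)
next
  case False
  obtain X where "X \<in> ebct_set F a b c d"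
    using assms(3) by blast
  then have "card (ddt_set F c d) \<le> card (ebct_set F a b c d)"
    using four_le_card_ebct_set[OF char assms(1,2) False]
      card_ddt_set_eq_4_if_ebct_set_nonempty[OF assms(1,2) False assms(3)] by simp
  then show ?thesis
    by (intro card_seteq finite ebct_set_subset_ddt_set)
qed

lemma ebct_set_subset_ebct_set:
  assumes "a \<noteq> 0" "a' \<noteq> 0" "c \<noteq> 0" "ebct_set F a b c d \<noteq> {}"
  shows "ebct_set F a' b' c d \<subseteq> ebct_set F a b c d"
  using ebct_set_eq_ddt_set[OF assms(2,3), of b' d] ebct_set_eq_ddt_set[OF assms(1,3,4)] by blast

lemma lbct_set_eq_ebct_set:
  assumes "a \<noteq> 0" "c \<noteq> 0" "ebct_set F a b c d \<noteq> {}"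
  shows "lbct_set F a c d = ebct_set F a b c d"
  using ebct_set_subset_ebct_set[OF assms(1,1,2,3)] unfolding lbct_set_eq_UN[OF char] by blast

lemma ubct_set_eq_ebct_set:
  assumes "b \<noteq> 0" "c \<noteq> 0" "ebct_set F a b c d \<noteq> {}"
  shows "ubct_set F c d b = ebct_set F a b c d"
proof -
  have "a \<noteq> 0"
    using assms(3) ebct_set_zero[OF char assms(1)] by blast
  have "ebct_set F a' b c d \<subseteq> ebct_set F a b c d" for a'
    using ebct_set_subset_ebct_set[OF \<open>a \<noteq> 0\<close> _ assms(2,3)] ebct_set_zero[OF char assms(1)]
    by (cases "a' = 0") auto
  then show ?thesis
    unfolding ubct_set_eq_UN[OF char] by blast
qed

lemma LBCT_eq_iff_ex_EBCT_eq:
  assumes "a \<noteq> 0" "c \<noteq> 0" "k \<noteq> 0"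
  shows "LBCT F a c d = k \<longleftrightarrow> (\<exists>b. EBCT F a b c d = k)"
proof
  assume L: "LBCT F a c d = k"
  then obtain b where "ebct_set F a b c d \<noteq> {}"
    using assms(3) unfolding LBCT_eq_card lbct_set_eq_UN[OF char] by fastforce
  then show "\<exists>b. EBCT F a b c d = k"
    using L lbct_set_eq_ebct_set[OF assms(1,2)] unfolding LBCT_eq_card EBCT_eq_card by metis
next
  assume "\<exists>b. EBCT F a b c d = k"
  then obtain b where E: "card (ebct_set F a b c d) = k"
    unfolding EBCT_eq_card by blast
  then have "ebct_set F a b c d \<noteq> {}"
    using assms(3) by auto
  then show "LBCT F a c d = k"
    using E lbct_set_eq_ebct_set[OF assms(1,2)] unfolding LBCT_eq_card by simp
qed

lemma UBCT_eq_iff_ex_EBCT_eq: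
  assumes "b \<noteq> 0" "c \<noteq> 0" "k \<noteq> 0"
  shows "UBCT F c d b = k \<longleftrightarrow> (\<exists>a. EBCT F a b c d = k)"
proof
  assume U: "UBCT F c d b = k"
  then obtain a where "ebct_set F a b c d \<noteq> {}"
    using assms(3) unfolding UBCT_eq_card ubct_set_eq_UN[OF char] by fastforce
  then show "\<exists>a. EBCT F a b c d = k"
    using U ubct_set_eq_ebct_set[OF assms(1,2)] unfolding UBCT_eq_card EBCT_eq_card by metis
next
  assume "\<exists>a. EBCT F a b c d = k"
  then obtain a where E: "card (ebct_set F a b c d) = k"
    unfolding EBCT_eq_card by blast
  then have "ebct_set F a b c d \<noteq> {}"
    using assms(3) by auto
  then show "UBCT F c d b = k"
    using E ubct_set_eq_ebct_set[OF assms(1,2)] unfolding UBCT_eq_card by simp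
qed

lemma EBCT_eq_iff_LBCT_eq_and_UBCT_eq:
  assumes "a \<noteq> 0" "b \<noteq> 0" "c \<noteq> 0" "k \<noteq> 0" "k \<noteq> 4"
  shows "EBCT F a b c d = k \<longleftrightarrow> LBCT F a c d = k \<and> UBCT F c d b = k"
proof
  assume "EBCT F a b c d = k"
  then have "ebct_set F a b c d \<noteq> {}"
    using assms(4) unfolding EBCT_eq_card by force
  then show "LBCT F a c d = k \<and> UBCT F c d b = k"
    using \<open>EBCT F a b c d = k\<close> lbct_set_eq_ebct_set[OF assms(1,3)] ubct_set_eq_ebct_set[OF assms(2,3)]
    unfolding EBCT_eq_card LBCT_eq_card UBCT_eq_card by simp
next
  assume "LBCT F a c d = k \<and> UBCT F c d b = k"
  then obtain b' a' where E_ab': "card (ebct_set F a b' c d) = k"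
    and E_a'b: "card (ebct_set F a' b c d) = k"
    using LBCT_eq_iff_ex_EBCT_eq[OF assms(1,3,4)] UBCT_eq_iff_ex_EBCT_eq[OF assms(2,3,4)]
    unfolding EBCT_eq_card by blast
  then have ne: "ebct_set F a b' c d \<noteq> {}" "ebct_set F a' b c d \<noteq> {}"
    using assms(4) by auto
  then have "a' \<noteq> 0"
    using ebct_set_zero[OF char assms(2)] by blast
  have "card (ddt_set F c d) \<noteq> 4"
    using E_ab' ebct_set_eq_ddt_set[OF assms(1,3) ne(1)] assms(5) by simp
  then have "a = c" "a' = c"
    using card_ddt_set_eq_4_if_ebct_set_nonempty assms(1,3) \<open>a' \<noteq> 0\<close> ne by blast+
  then show "EBCT F a b c d = k"
    using E_a'b unfolding EBCT_eq_card by simp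
qed

end

theorem mainTheorem10:
  fixes F :: "'a::{field,finite} \<Rightarrow> 'a" and n :: nat
  assumes card: "card (UNIV :: 'a set) = 2 ^ n"
    and uni: "diff_4_uniform F"
  defines "A \<equiv> {(a, c, d). \<exists>b. EBCT F a b c d = 4}"
    and "B \<equiv> {(c, d, b). \<exists>a. EBCT F a b c d = 4}"
  shows "(\<forall>a b c d. a \<noteq> 0 \<and> b \<noteq> 0 \<and> c \<noteq> 0 \<and> d \<noteq> 0 \<longrightarrow>
            (EBCT F a b c d = 2 \<longleftrightarrow> LBCT F a c d = 2 \<and> UBCT F c d b = 2))
       \<and> (\<forall>a c d. a \<noteq> 0 \<and> c \<noteq> 0 \<and> d \<noteq> 0 \<longrightarrow> ((a, c, d) \<in> A \<longleftrightarrow> LBCT F a c d = 4))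
       \<and> (\<forall>c d b. c \<noteq> 0 \<and> d \<noteq> 0 \<and> b \<noteq> 0 \<longrightarrow> ((c, d, b) \<in> B \<longleftrightarrow> UBCT F c d b = 4))"
proof -
  have char: "CHAR('a) = 2"
    using card by (rule CHAR_eq_2_if_card_eq_power_2)
  note EBCT_eq_iff_LBCT_eq_and_UBCT_eq[OF char uni]
    and LBCT_eq_iff_ex_EBCT_eq[OF char uni] and UBCT_eq_iff_ex_EBCT_eq[OF char uni]
  then show ?thesis
    unfolding A_def B_def by auto
qed

end
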